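(* Let $\mathfrak{g}$ be a real Lie algebra of dimension $2n$ and let $J$ be a smooth point of $\mathcal{C}(\mathfrak{g})$. Then, under the identification $T_J\mathcal{C}\cong\mathrm{Hom}(\Lambda^{1,0},\Lambda^{0,1})$, the tangent space $T_J\mathcal{C}(\mathfrak{g})$ is contained in $K=\{\theta\in\mathrm{Hom}(\Lambda^{1,0},\Lambda^{0,1}):\bar\partial\theta=0\}$.
   Context: $\mathcal{C}$ is the set of almost-complex structures $J$ on $\mathfrak{g}$ ($J^2=-1$), and $\mathcal{C}(\mathfrak{g})$ the subset of integrable ones, i.e. satisfying $[JX,JY]=[X,Y]+J[JX,Y]+J[X,JY]$. Identifying $J$ with its space $\Lambda^{1,0}=\Lambda^{1,0}_J$ of $(1,0)$-forms (complex-linear $\omega$ with $\omega(JX)=i\omega(X)$), $\mathcal{C}$ is the open subset of the Grassmannian of complex $n$-dimensional subspaces $\Lambda\subseteq\mathfrak{g}^*_{\mathbb{C}}$ with $\Lambda\cap\overline{\Lambda}=\{0\}$. Tangent vectors are identified with $\mathrm{Hom}(\Lambda^{1,0},\Lambda^{0,1})$, $\Lambda^{0,1}=\overline{\Lambda^{1,0}}$: if $\{\omega^1,\dots,\omega^n\}$ is a basis of $\Lambda^{1,0}$ and $\tau^i(t)\in\Lambda^{1,0}$ are paths with $\tau^i(0)=0$, $\dot\tau^i(0)=\sigma^i$, the path $\Lambda_t=\langle\omega^1+\overline{\tau^1(t)},\dots,\omega^n+\overline{\tau^n(t)}\rangle$ has tangent vector $\theta\colon\omega^i\mapsto\overline{\sigma^i}$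 at $t=0$. With $d\alpha(X,Y)=-\alpha([X,Y])$ extended complex-linearly, and $J$ integrable, $d\Lambda^{1,0}\subseteq\Lambda^{2,0}\oplus\Lambda^{1,1}$; for $\omega\in\Lambda^{1,0}$, $\bar\partial\omega$ is the $(1,1)$-component of $d\omega$, and for $\beta\in\Lambda^{0,1}$, $\bar\partial\beta$ is the $(0,2)$-component of $d\beta$. For $\theta\in\mathrm{Hom}(\Lambda^{1,0},\Lambda^{0,1})$ define $\bar\partial\theta\in\mathrm{Hom}(\Lambda^{1,0},\Lambda^{0,2})$ by $(\bar\partial\theta)(\omega)=\bar\partial(\theta\omega)-\theta(\bar\partial\omega)$, where $\theta(\alpha\wedge\bar\beta)=\theta(\alpha)\wedge\bar\beta$ for $\alpha\in\Lambda^{1,0}$, $\bar\beta\in\Lambda^{0,1}$, extended linearly. *)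

theory Defs
  imports "HOL-Analysis.Analysis"
begin

definition lie_bracket :: "(real^'n \<Rightarrow> real^'n \<Rightarrow> real^'n) \<Rightarrow> bool" where
  "lie_bracket br \<longleftrightarrow>
     (\<forall>x. linear (br x)) \<and> (\<forall>y. linear (\<lambda>x. br x y)) \<and>
     (\<forall>x y. br x y = - br y x) \<and>
     (\<forall>x y z. br x (br y z) + br y (br z x) + br z (br x y) = 0)"

definition acs :: "(real^'n^'n) set" where
  "acs = {J. J ** J = - mat 1}"

definition integrable :: "(real^'n \<Rightarrow> real^'n \<Rightarrow> real^'n) \<Rightarrow> real^'n^'n \<Rightarrow> bool" where
  "integrable br J \<longleftrightarrow>
     (\<forall>X Y. br (J *v X) (J *v Y) = br X Y + J *v br (J *v X) Y + J *v br X (J *v Y))"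

definition Cg :: "(real^'n \<Rightarrow> real^'n \<Rightarrow> real^'n) \<Rightarrow> (real^'n^'n) set" where
  "Cg br = {J \<in> acs. integrable br J}"

text \<open>Complex-valued forms on g (= complex-linear forms on the complexification).
  1-forms: real-linear maps g \<Rightarrow> complex; 2-forms: maps g \<Rightarrow> g \<Rightarrow> complex.\<close>

type_synonym 'n form1 = "real^'n \<Rightarrow> complex"
type_synonym 'n form2 = "real^'n \<Rightarrow> real^'n \<Rightarrow> complex"

definition L10 :: "real^'n^'n \<Rightarrow> 'n form1 set" where
  "L10 J = {\<omega>. linear \<omega> \<and> (\<forall>x. \<omega> (J *v x) = \<i> * \<omega> x)}"

definition L01 :: "real^'n^'n \<Rightarrow> 'n form1 set" where
  "L01 J = {\<omega>. linear \<omega> \<and> (\<forall>x. \<omega> (J *v x) = - \<i> * \<omega> x)}"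

definition wedge :: "'n form1 \<Rightarrow> 'n form1 \<Rightarrow> 'n form2" where
  "wedge \<alpha> \<beta> = (\<lambda>X Y. \<alpha> X * \<beta> Y - \<alpha> Y * \<beta> X)"

definition sum_wedges :: "nat \<Rightarrow> (nat \<Rightarrow> 'n form1) \<Rightarrow> (nat \<Rightarrow> 'n form1) \<Rightarrow> 'n form2" where
  "sum_wedges m \<alpha> \<beta> = (\<lambda>X Y. \<Sum>k<m. wedge (\<alpha> k) (\<beta> k) X Y)"

definition L20 :: "real^'n^'n \<Rightarrow> 'n form2 set" where
  "L20 J = {sum_wedges m \<alpha> \<beta> | m \<alpha> \<beta>. \<forall>k<m. \<alpha> k \<in> L10 J \<and> \<beta> k \<in> L10 J}"

definition L11 :: "real^'n^'n \<Rightarrow> 'n form2 set" where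
  "L11 J = {sum_wedges m \<alpha> \<beta> | m \<alpha> \<beta>. \<forall>k<m. \<alpha> k \<in> L10 J \<and> \<beta> k \<in> L01 J}"

definition L02 :: "real^'n^'n \<Rightarrow> 'n form2 set" where
  "L02 J = {sum_wedges m \<alpha> \<beta> | m \<alpha> \<beta>. \<forall>k<m. \<alpha> k \<in> L01 J \<and> \<beta> k \<in> L01 J}"

definition comp11 :: "real^'n^'n \<Rightarrow> 'n form2 \<Rightarrow> 'n form2" where
  "comp11 J \<gamma> = (THE b. \<exists>a c. a \<in> L20 J \<and> b \<in> L11 J \<and> c \<in> L02 J \<and>
                          \<gamma> = (\<lambda>X Y. a X Y + b X Y + c X Y))"

definition comp02 :: "real^'n^'n \<Rightarrow> 'n form2 \<Rightarrow> 'n form2" where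
  "comp02 J \<gamma> = (THE c. \<exists>a b. a \<in> L20 J \<and> b \<in> L11 J \<and> c \<in> L02 J \<and>
                          \<gamma> = (\<lambda>X Y. a X Y + b X Y + c X Y))"

definition dform :: "(real^'n \<Rightarrow> real^'n \<Rightarrow> real^'n) \<Rightarrow> 'n form1 \<Rightarrow> 'n form2" where
  "dform br \<alpha> = (\<lambda>X Y. - \<alpha> (br X Y))"

definition dbar10 :: "(real^'n \<Rightarrow> real^'n \<Rightarrow> real^'n) \<Rightarrow> real^'n^'n \<Rightarrow> 'n form1 \<Rightarrow> 'n form2" where
  "dbar10 br J \<omega> = comp11 J (dform br \<omega>)"

definition dbar01 :: "(real^'n \<Rightarrow> real^'n \<Rightarrow> real^'n) \<Rightarrow> real^'n^'n \<Rightarrow> 'n form1 \<Rightarrow> 'n form2" where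
  "dbar01 br J \<beta> = comp02 J (dform br \<beta>)"

definition is_hom :: "real^'n^'n \<Rightarrow> ('n form1 \<Rightarrow> 'n form1) \<Rightarrow> bool" where
  "is_hom J \<theta> \<longleftrightarrow>
     (\<forall>\<omega>\<in>L10 J. \<theta> \<omega> \<in> L01 J) \<and>
     (\<forall>\<omega>\<in>L10 J. \<forall>\<omega>'\<in>L10 J. \<theta> (\<lambda>x. \<omega> x + \<omega>' x) = (\<lambda>x. \<theta> \<omega> x + \<theta> \<omega>' x)) \<and>
     (\<forall>\<omega>\<in>L10 J. \<forall>c::complex. \<theta> (\<lambda>x. c * \<omega> x) = (\<lambda>x. c * \<theta> \<omega> x))"

definition theta11 :: "real^'n^'n \<Rightarrow> ('n form1 \<Rightarrow> 'n form1) \<Rightarrow> 'n form2 \<Rightarrow> 'n form2" where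
  "theta11 J \<theta> \<gamma> = (THE \<delta>. \<exists>m \<alpha> \<beta>. (\<forall>k<m. \<alpha> k \<in> L10 J \<and> \<beta> k \<in> L01 J) \<and>
                        \<gamma> = sum_wedges m \<alpha> \<beta> \<and> \<delta> = sum_wedges m (\<lambda>k. \<theta> (\<alpha> k)) \<beta>)"

definition dbar_hom :: "(real^'n \<Rightarrow> real^'n \<Rightarrow> real^'n) \<Rightarrow> real^'n^'n \<Rightarrow>
                        ('n form1 \<Rightarrow> 'n form1) \<Rightarrow> 'n form1 \<Rightarrow> 'n form2" where
  "dbar_hom br J \<theta> \<omega> = (\<lambda>X Y. dbar01 br J (\<theta> \<omega>) X Y - theta11 J \<theta> (dbar10 br J \<omega>) X Y)"

definition Kspace :: "(real^'n \<Rightarrow> real^'n \<Rightarrow> real^'n) \<Rightarrow> real^'n^'n \<Rightarrow> ('n form1 \<Rightarrow> 'n form1) set" where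
  "Kspace br J = {\<theta>. is_hom J \<theta> \<and> (\<forall>\<omega>\<in>L10 J. dbar_hom br J \<theta> \<omega> = (\<lambda>X Y. 0))}"

text \<open>Tangent vectors to C(g) at J, identified with elements of Hom(L10,L01) as in the paper:
  a path J_t in C(g) through J gives L10(J_t) = span of \<omega> + \<beta>_\<omega>(t), \<beta>_\<omega>(t) \<in> L01(J),
  \<beta>_\<omega>(0) = 0, and the tangent vector is \<theta> : \<omega> \<mapsto> \<beta>_\<omega>'(0).\<close>

definition tangent_space :: "(real^'n \<Rightarrow> real^'n \<Rightarrow> real^'n) \<Rightarrow> real^'n^'n \<Rightarrow> ('n form1 \<Rightarrow> 'n form1) set" where
  "tangent_space br J = {\<theta>. \<exists>Jt :: real \<Rightarrow> real^'n^'n.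
      Jt 0 = J \<and> (\<forall>t. Jt t \<in> Cg br) \<and>
      (\<forall>\<omega>\<in>L10 J. \<exists>\<beta> :: real \<Rightarrow> 'n form1.
          (\<forall>\<^sub>F t in nhds 0. \<beta> t \<in> L01 J \<and> (\<lambda>x. \<omega> x + \<beta> t x) \<in> L10 (Jt t)) \<and>
          \<beta> 0 = (\<lambda>x. 0) \<and>
          (\<forall>x. ((\<lambda>t. \<beta> t x) has_vector_derivative \<theta> \<omega> x) (at 0)))}"

fun Ck_on :: "nat \<Rightarrow> ('a::euclidean_space \<Rightarrow> 'b::euclidean_space) \<Rightarrow> 'a set \<Rightarrow> bool" where
  "Ck_on 0 f U = continuous_on U f"
| "Ck_on (Suc k) f U = (f differentiable_on U \<and>
      (\<forall>v. Ck_on k (\<lambda>x. frechet_derivative f (at x) v) U))"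

definition smooth_on :: "('a::euclidean_space \<Rightarrow> 'b::euclidean_space) \<Rightarrow> 'a set \<Rightarrow> bool" where
  "smooth_on f U \<longleftrightarrow> (\<forall>k. Ck_on k f U)"

text \<open>p is a smooth point of S: near p, S is an embedded smooth submanifold, i.e. locally the
  image of a smooth immersion (from an open piece of a linear subspace E) which is a
  homeomorphism onto its image.\<close>

definition smooth_point :: "'v::euclidean_space set \<Rightarrow> 'v \<Rightarrow> bool" where
  "smooth_point S p \<longleftrightarrow> p \<in> S \<and>
     (\<exists>U W E (\<phi> :: 'v \<Rightarrow> 'v). open U \<and> p \<in> U \<and> open W \<and> subspace E \<and> smooth_on \<phi> W \<and>
        \<phi> ` (E \<inter> W) = S \<inter> U \<and> inj_on \<phi> (E \<inter> W) \<and>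
        continuous_on (S \<inter> U) (inv_into (E \<inter> W) \<phi>) \<and>
        (\<forall>x\<in>E \<inter> W. inj_on (frechet_derivative \<phi> (at x)) E))"

end

theory Submission
  imports Defs
begin

(*
  Let J_t be a path in C(g) through J with tangent vector \<theta>: each (1,0)-form \<omega> of J lifts to
  the (1,0)-form \<omega> + \<beta>_t of J_t, where \<beta>_t is of type (0,1) for J, \<beta>_0 = 0 and \<theta>(\<omega>) is the
  derivative of \<beta>_t at t = 0. Lifting the (1,0)-parts of the coordinate forms shows J_t \<rightarrow> J, hence
  the (0,1)-forms of J meet the (1,0)-forms of J_t only in 0 for small t; so lifts are unique and
  \<theta> is complex linear. Integrability of J_t says that d(\<omega> + \<beta>_t) has no (0,2)-part for J_t.
  Writing J_t = J + D_t, the (0,2)-part of d\<omega> for J_t is, up to the quadratic term d\<omega>(D_t X, D_t Y),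
  the (1,1)-part of d\<omega> for J evaluated on D_t, and \<psi>(D_t X) = 2i \<beta>_t(X) - \<beta>_t(D_t X) turns
  \<psi>(D_t X)/t into 2i \<theta>(\<psi>)(X). Dividing by t and letting t \<rightarrow> 0 gives dbar(\<theta> \<omega>) = \<theta>(dbar \<omega>).
*)

lemma acs_mult_twice:
  assumes "J \<in> acs"
  shows "J *v (J *v x) = - x"
proof -
  have "J *v (J *v x) = (0 - mat 1) *v x"
    using assms by (simp add: acs_def matrix_vector_mul_assoc)
  also have "\<dots> = - x"
    by (simp only: matrix_vector_mult_diff_rdistrib) simp
  finally show ?thesis .
qed

lemma linear_vec_expansion:
  fixes f :: "real^'n \<Rightarrow> 'b::real_vector"
  assumes "linear f"
  shows "f v = (\<Sum>i\<in>UNIV. v$i *\<^sub>R f (axis i 1))"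
proof -
  have "f v = f (\<Sum>i\<in>UNIV. v$i *\<^sub>R axis i 1)"
    using basis_expansion[of v] by (simp add: scalar_mult_eq_scaleR)
  also have "\<dots> = (\<Sum>i\<in>UNIV. v$i *\<^sub>R f (axis i 1))"
    by (simp add: linear_sum[OF assms] linear_scale[OF assms])
  finally show ?thesis .
qed

lemma bilinear_vec_expansion:
  fixes f :: "real^'n \<Rightarrow> real^'n \<Rightarrow> 'b::real_vector"
  assumes "bilinear f"
  shows "f X Y = (\<Sum>i\<in>UNIV. \<Sum>j\<in>UNIV. (X$i * Y$j) *\<^sub>R f (axis i 1) (axis j 1))"
proof -
  have "f X Y = (\<Sum>i\<in>UNIV. X$i *\<^sub>R f (axis i 1) Y)"
    using linear_vec_expansion[of "\<lambda>X. f X Y" X] assms by (simp add: bilinear_def)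
  also have "\<dots> = (\<Sum>i\<in>UNIV. X$i *\<^sub>R (\<Sum>j\<in>UNIV. Y$j *\<^sub>R f (axis i 1) (axis j 1)))"
    using linear_vec_expansion[of "f (axis _ 1)" Y] assms by (simp add: bilinear_def)
  finally show ?thesis
    by (simp add: scaleR_sum_right)
qed

lemma norm_linear_le_sum:
  fixes f :: "real^'n \<Rightarrow> 'b::real_normed_vector"
  assumes "linear f"
  shows "norm (f v) \<le> (\<Sum>i\<in>UNIV. \<bar>v$i\<bar> * norm (f (axis i 1)))"
  using norm_sum[of "\<lambda>i. v$i *\<^sub>R f (axis i 1)" UNIV] linear_vec_expansion[OF assms, of v]
  by simp

(* Unlike scaleR_conv_of_real, this does not also rewrite scalings of the real algebra real^'n. *)
lemma complex_scaleR_eq_mult: "r *\<^sub>R (z :: complex) = complex_of_real r * z"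
  by (rule scaleR_conv_of_real)

lemma linear_mult_left_complex:
  "linear (f :: 'a::real_vector \<Rightarrow> complex) \<Longrightarrow> linear (\<lambda>x. c * f x)"
  unfolding linear_iff by (simp add: algebra_simps complex_scaleR_eq_mult)

section \<open>Forms of type (1,0) and (0,1)\<close>

lemma L10_linear: "\<omega> \<in> L10 J \<Longrightarrow> linear \<omega>"
  by (simp add: L10_def)

lemma L01_linear: "\<omega> \<in> L01 J \<Longrightarrow> linear \<omega>"
  by (simp add: L01_def)

lemma L10_mult_J: "\<omega> \<in> L10 J \<Longrightarrow> \<omega> (J *v x) = \<i> * \<omega> x"
  by (simp add: L10_def)

lemma L01_mult_J: "\<omega> \<in> L01 J \<Longrightarrow> \<omega> (J *v x) = - \<i> * \<omega> x"
  by (simp add: L01_def)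

lemma L10_zero: "(\<lambda>x. 0) \<in> L10 J"
  by (simp add: L10_def linear_zero)

lemma L10_add: "\<alpha> \<in> L10 J \<Longrightarrow> \<beta> \<in> L10 J \<Longrightarrow> (\<lambda>x. \<alpha> x + \<beta> x) \<in> L10 J"
  by (auto simp: L10_def algebra_simps intro: linear_compose_add)

lemma L01_add: "\<alpha> \<in> L01 J \<Longrightarrow> \<beta> \<in> L01 J \<Longrightarrow> (\<lambda>x. \<alpha> x + \<beta> x) \<in> L01 J"
  by (auto simp: L01_def algebra_simps intro: linear_compose_add)

lemma L10_scale: "\<alpha> \<in> L10 J \<Longrightarrow> (\<lambda>x. c * \<alpha> x) \<in> L10 J"
  by (auto simp: L10_def linear_mult_left_complex)

lemma L01_scale: "\<alpha> \<in> L01 J \<Longrightarrow> (\<lambda>x. c * \<alpha> x) \<in> L01 J"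
  by (auto simp: L01_def linear_mult_left_complex)

lemma L10_diff: "\<alpha> \<in> L10 J \<Longrightarrow> \<beta> \<in> L10 J \<Longrightarrow> (\<lambda>x. \<alpha> x - \<beta> x) \<in> L10 J"
  using L10_add[of \<alpha> J "\<lambda>x. (-1) * \<beta> x"] L10_scale[of \<beta> J "-1"] by simp

lemma L01_diff: "\<alpha> \<in> L01 J \<Longrightarrow> \<beta> \<in> L01 J \<Longrightarrow> (\<lambda>x. \<alpha> x - \<beta> x) \<in> L01 J"
  using L01_add[of \<alpha> J "\<lambda>x. (-1) * \<beta> x"] L01_scale[of \<beta> J "-1"] by simp

lemma L10_sum: "(\<And>k. k \<in> S \<Longrightarrow> \<alpha> k \<in> L10 J) \<Longrightarrow> (\<lambda>x. \<Sum>k\<in>S. \<alpha> k x) \<in> L10 J"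
  by (induction S rule: infinite_finite_induct) (simp_all add: L10_zero L10_add)

definition is_lift :: "real^'n^'n \<Rightarrow> real^'n^'n \<Rightarrow> 'n form1 \<Rightarrow> 'n form1 \<Rightarrow> bool" where
  "is_lift J J' \<psi> \<beta> \<longleftrightarrow> \<beta> \<in> L01 J \<and> (\<lambda>x. \<psi> x + \<beta> x) \<in> L10 J'"

lemma is_lift_add:
  assumes "is_lift J J' \<psi> \<beta>" "is_lift J J' \<psi>' \<beta>'"
  shows "is_lift J J' (\<lambda>x. \<psi> x + \<psi>' x) (\<lambda>x. \<beta> x + \<beta>' x)"
  using L01_add[of \<beta> J \<beta>'] L10_add[of "\<lambda>x. \<psi> x + \<beta> x" J' "\<lambda>x. \<psi>' x + \<beta>' x"] assms
  by (simp add: is_lift_def algebra_simps)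

lemma is_lift_scale:
  assumes "is_lift J J' \<psi> \<beta>"
  shows "is_lift J J' (\<lambda>x. c * \<psi> x) (\<lambda>x. c * \<beta> x)"
  using L01_scale[of \<beta> J c] L10_scale[of "\<lambda>x. \<psi> x + \<beta> x" J' c] assms
  by (simp add: is_lift_def algebra_simps)

lemma is_lift_unique:
  assumes trivial: "\<forall>\<delta>. \<delta> \<in> L01 J \<and> \<delta> \<in> L10 J' \<longrightarrow> \<delta> = (\<lambda>x. 0)"
    and "is_lift J J' \<psi> \<beta>" "is_lift J J' \<psi> \<beta>'"
  shows "\<beta> = \<beta>'"
proof -
  have "(\<lambda>x. \<beta> x - \<beta>' x) \<in> L01 J"
    using assms by (simp add: is_lift_def L01_diff)
  moreover have "(\<lambda>x. \<beta> x - \<beta>' x) \<in> L10 J'"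
    using L10_diff[of "\<lambda>x. \<psi> x + \<beta> x" J' "\<lambda>x. \<psi> x + \<beta>' x"] assms
    by (simp add: is_lift_def)
  ultimately have "(\<lambda>x. \<beta> x - \<beta>' x) = (\<lambda>x. 0)"
    using trivial by simp
  then show ?thesis
    by (simp add: fun_eq_iff)
qed

lemma is_lift_apply_difference:
  assumes "\<psi> \<in> L10 J" "is_lift J J' \<psi> \<beta>"
  shows "\<psi> (J' *v X - J *v X) = 2 * \<i> * \<beta> X - \<beta> (J' *v X - J *v X)"
proof -
  have \<beta>: "\<beta> \<in> L01 J" and lifted: "(\<lambda>x. \<psi> x + \<beta> x) \<in> L10 J'"
    using assms(2) by (simp_all add: is_lift_def)
  have "\<psi> (J' *v X) + \<beta> (J' *v X) = \<i> * (\<psi> X + \<beta> X)"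
    using L10_mult_J[OF lifted] by simp
  then show ?thesis
    using assms(1) \<beta> by (simp add: linear_diff L10_linear L01_linear L10_mult_J L01_mult_J algebra_simps)
qed

lemma L01_inter_L10_apply_difference:
  assumes "\<delta> \<in> L01 J" "\<delta> \<in> L10 J'"
  shows "\<delta> (J' *v X - J *v X) = 2 * \<i> * \<delta> X"
  using assms by (simp add: linear_diff L01_linear L01_mult_J L10_mult_J)

definition coord10 :: "real^'n^'n \<Rightarrow> 'n \<Rightarrow> 'n form1" where
  "coord10 J i = (\<lambda>V. (complex_of_real (V$i) - \<i> * complex_of_real ((J *v V)$i)) / 2)"

definition coord01 :: "real^'n^'n \<Rightarrow> 'n \<Rightarrow> 'n form1" where
  "coord01 J i = (\<lambda>V. (complex_of_real (V$i) + \<i> * complex_of_real ((J *v V)$i)) / 2)"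

lemma linear_coord_combination:
  fixes J :: "real^'n^'n"
  shows "linear (\<lambda>V. (complex_of_real (V$i) + c * complex_of_real ((J *v V)$i)) / 2)"
  unfolding linear_iff
  by (simp add: linear_add[OF matrix_vector_mul_linear] linear_scale[OF matrix_vector_mul_linear]
      complex_scaleR_eq_mult algebra_simps add_divide_distrib)

lemma coord10_in_L10: "J \<in> acs \<Longrightarrow> coord10 J i \<in> L10 J"
  using linear_coord_combination[of i "- \<i>" J]
  by (simp add: L10_def coord10_def acs_mult_twice field_simps)

lemma coord01_in_L01: "J \<in> acs \<Longrightarrow> coord01 J i \<in> L01 J"
  using linear_coord_combination[of i \<i> J]
  by (simp add: L01_def coord01_def acs_mult_twice field_simps)

lemma coord10_add_coord01: "coord10 J i V + coord01 J i V = complex_of_real (V$i)"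
  by (simp add: coord10_def coord01_def add_divide_distrib[symmetric])

lemma Re_coord10: "Re (coord10 J i V) = V$i / 2"
  by (simp add: coord10_def)

section \<open>The type decomposition of 2-forms\<close>

definition wedge_span :: "'n form1 set \<Rightarrow> 'n form1 set \<Rightarrow> 'n form2 set" where
  "wedge_span A B = {sum_wedges m \<alpha> \<beta> | m \<alpha> \<beta>. \<forall>k<m. \<alpha> k \<in> A \<and> \<beta> k \<in> B}"

lemma L20_eq_wedge_span: "L20 J = wedge_span (L10 J) (L10 J)"
  by (simp add: L20_def wedge_span_def)

lemma L11_eq_wedge_span: "L11 J = wedge_span (L10 J) (L01 J)"
  by (simp add: L11_def wedge_span_def)

lemma L02_eq_wedge_span: "L02 J = wedge_span (L01 J) (L01 J)"
  by (simp add: L02_def wedge_span_def)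

lemma wedge_span_zero: "(\<lambda>X Y. 0) \<in> wedge_span A B"
  unfolding wedge_span_def by (rule CollectI, rule exI[of _ 0]) (auto simp: sum_wedges_def)

lemma wedge_span_add_wedge:
  assumes "\<gamma> \<in> wedge_span A B" "\<alpha>' \<in> A" "\<beta>' \<in> B"
  shows "(\<lambda>X Y. \<gamma> X Y + wedge \<alpha>' \<beta>' X Y) \<in> wedge_span A B"
proof -
  obtain m \<alpha> \<beta> where \<gamma>: "\<gamma> = sum_wedges m \<alpha> \<beta>" "\<forall>k<m. \<alpha> k \<in> A \<and> \<beta> k \<in> B"
    using assms(1) by (auto simp: wedge_span_def)
  have "(\<lambda>X Y. \<gamma> X Y + wedge \<alpha>' \<beta>' X Y) = sum_wedges (Suc m) (\<alpha>(m := \<alpha>')) (\<beta>(m := \<beta>'))"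
    unfolding \<gamma> sum_wedges_def by (auto simp: fun_eq_iff intro!: sum.cong)
  moreover have "\<forall>k<Suc m. (\<alpha>(m := \<alpha>')) k \<in> A \<and> (\<beta>(m := \<beta>')) k \<in> B"
    using \<gamma> assms by (auto simp: less_Suc_eq)
  ultimately show ?thesis
    unfolding wedge_span_def by blast
qed

lemma wedge_span_wedge: "\<alpha> \<in> A \<Longrightarrow> \<beta> \<in> B \<Longrightarrow> wedge \<alpha> \<beta> \<in> wedge_span A B"
  using wedge_span_add_wedge[OF wedge_span_zero, of \<alpha> A \<beta> B] by simp

lemma wedge_span_add:
  assumes "\<gamma> \<in> wedge_span A B" "\<gamma>' \<in> wedge_span A B"
  shows "(\<lambda>X Y. \<gamma> X Y + \<gamma>' X Y) \<in> wedge_span A B"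
proof -
  obtain m \<alpha> \<beta> where \<gamma>': "\<gamma>' = sum_wedges m \<alpha> \<beta>" "\<forall>k<m. \<alpha> k \<in> A \<and> \<beta> k \<in> B"
    using assms(2) by (auto simp: wedge_span_def)
  have "(\<lambda>X Y. \<gamma> X Y + sum_wedges m \<alpha> \<beta> X Y) \<in> wedge_span A B" if "\<forall>k<m. \<alpha> k \<in> A \<and> \<beta> k \<in> B"
    using that
  proof (induction m)
    case 0
    then show ?case using assms(1) by (simp add: sum_wedges_def)
  next
    case (Suc m)
    then show ?case
      using wedge_span_add_wedge[of "\<lambda>X Y. \<gamma> X Y + sum_wedges m \<alpha> \<beta> X Y" A B "\<alpha> m" "\<beta> m"]
      by (simp add: sum_wedges_def add.assoc)
  qed
  with \<gamma>' show ?thesis by simp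
qed

lemma wedge_span_mult_J_J:
  assumes "\<gamma> \<in> wedge_span A B"
    and "\<And>\<alpha> x. \<alpha> \<in> A \<Longrightarrow> \<alpha> (J *v x) = a * \<alpha> x" "\<And>\<beta> x. \<beta> \<in> B \<Longrightarrow> \<beta> (J *v x) = b * \<beta> x"
  shows "\<gamma> (J *v X) (J *v Y) = (a * b) * \<gamma> X Y"
proof -
  obtain m \<alpha> \<beta> where \<gamma>: "\<gamma> = sum_wedges m \<alpha> \<beta>" "\<forall>k<m. \<alpha> k \<in> A \<and> \<beta> k \<in> B"
    using assms(1) by (auto simp: wedge_span_def)
  have "\<alpha> k (J *v x) = a * \<alpha> k x" "\<beta> k (J *v x) = b * \<beta> k x" if "k < m" for k x
    using \<gamma>(2) assms(2,3) that by auto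
  then show ?thesis
    unfolding \<gamma>(1) sum_wedges_def wedge_def sum_distrib_left
    by (intro sum.cong refl) (simp add: algebra_simps)
qed

lemma wedge_span_mult_J_add:
  assumes "\<gamma> \<in> wedge_span A B"
    and "\<And>\<alpha> x. \<alpha> \<in> A \<Longrightarrow> \<alpha> (J *v x) = a * \<alpha> x" "\<And>\<beta> x. \<beta> \<in> B \<Longrightarrow> \<beta> (J *v x) = b * \<beta> x"
  shows "\<gamma> (J *v X) Y + \<gamma> X (J *v Y) = (a + b) * \<gamma> X Y"
proof -
  obtain m \<alpha> \<beta> where \<gamma>: "\<gamma> = sum_wedges m \<alpha> \<beta>" "\<forall>k<m. \<alpha> k \<in> A \<and> \<beta> k \<in> B"
    using assms(1) by (auto simp: wedge_span_def)
  have "\<alpha> k (J *v x) = a * \<alpha> k x" "\<beta> k (J *v x) = b * \<beta> k x" if "k < m" for k x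
    using \<gamma>(2) assms(2,3) that by auto
  then show ?thesis
    unfolding \<gamma>(1) sum_wedges_def wedge_def sum_distrib_left sum.distrib[symmetric]
    by (intro sum.cong refl) (simp add: algebra_simps)
qed

definition has_type_decomposition :: "real^'n^'n \<Rightarrow> 'n form2 \<Rightarrow> bool" where
  "has_type_decomposition J \<gamma> \<longleftrightarrow>
     (\<exists>a b c. a \<in> L20 J \<and> b \<in> L11 J \<and> c \<in> L02 J \<and> \<gamma> = (\<lambda>X Y. a X Y + b X Y + c X Y))"

lemma has_type_decomposition_zero: "has_type_decomposition J (\<lambda>X Y. 0)"
  unfolding has_type_decomposition_def L20_eq_wedge_span L11_eq_wedge_span L02_eq_wedge_span
  by (rule exI[of _ "\<lambda>X Y. 0"])+ (simp add: wedge_span_zero)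

lemma has_type_decomposition_add:
  assumes "has_type_decomposition J \<gamma>" "has_type_decomposition J \<gamma>'"
  shows "has_type_decomposition J (\<lambda>X Y. \<gamma> X Y + \<gamma>' X Y)"
proof -
  obtain a b c where abc: "a \<in> L20 J" "b \<in> L11 J" "c \<in> L02 J" "\<gamma> = (\<lambda>X Y. a X Y + b X Y + c X Y)"
    using assms(1) unfolding has_type_decomposition_def by blast
  obtain a' b' c' where abc': "a' \<in> L20 J" "b' \<in> L11 J" "c' \<in> L02 J"
    "\<gamma>' = (\<lambda>X Y. a' X Y + b' X Y + c' X Y)"
    using assms(2) unfolding has_type_decomposition_def by blast
  have "(\<lambda>X Y. a X Y + a' X Y) \<in> L20 J" "(\<lambda>X Y. b X Y + b' X Y) \<in> L11 J"
    "(\<lambda>X Y. c X Y + c' X Y) \<in> L02 J"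
    using abc abc' by (simp_all add: L20_eq_wedge_span L11_eq_wedge_span L02_eq_wedge_span wedge_span_add)
  moreover have "(\<lambda>X Y. \<gamma> X Y + \<gamma>' X Y) =
      (\<lambda>X Y. (a X Y + a' X Y) + (b X Y + b' X Y) + (c X Y + c' X Y))"
    unfolding abc(4) abc'(4) by (simp add: algebra_simps)
  ultimately show ?thesis
    unfolding has_type_decomposition_def by (intro exI conjI)
qed

lemma has_type_decomposition_sum:
  "finite S \<Longrightarrow> (\<And>k. k \<in> S \<Longrightarrow> has_type_decomposition J (w k)) \<Longrightarrow>
    has_type_decomposition J (\<lambda>X Y. \<Sum>k\<in>S. w k X Y)"
  by (induction S rule: finite_induct) (simp_all add: has_type_decomposition_zero has_type_decomposition_add)

lemma has_type_decomposition_wedge: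
  assumes "p \<in> L10 J" "p' \<in> L10 J" "q \<in> L01 J" "q' \<in> L01 J"
  shows "has_type_decomposition J (wedge (\<lambda>V. p V + q V) (\<lambda>V. p' V + q' V))"
proof -
  have "wedge p p' \<in> L20 J" "wedge q q' \<in> L02 J"
    using assms by (simp_all add: L20_eq_wedge_span L02_eq_wedge_span wedge_span_wedge)
  moreover have "(\<lambda>X Y. wedge p q' X Y + wedge (\<lambda>V. (-1) * p' V) q X Y) \<in> L11 J"
    unfolding L11_eq_wedge_span using assms by (intro wedge_span_add wedge_span_wedge L10_scale)
  moreover have "wedge (\<lambda>V. p V + q V) (\<lambda>V. p' V + q' V) =
      (\<lambda>X Y. wedge p p' X Y + (wedge p q' X Y + wedge (\<lambda>V. (-1) * p' V) q X Y) + wedge q q' X Y)"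
    by (simp add: wedge_def fun_eq_iff algebra_simps)
  ultimately show ?thesis
    unfolding has_type_decomposition_def by (intro exI conjI)
qed

lemma alternating_eq_sum_wedges:
  fixes \<gamma> :: "('n::finite) form2"
  assumes "bilinear \<gamma>" and alternating: "\<And>X Y. \<gamma> X Y = - \<gamma> Y X"
  shows "\<gamma> X Y = (\<Sum>i\<in>UNIV. \<Sum>j\<in>UNIV.
      wedge (\<lambda>V. \<gamma> (axis i 1) (axis j 1) / 2 * complex_of_real (V$i)) (\<lambda>V. complex_of_real (V$j)) X Y)"
proof -
  let ?g = "\<lambda>i j. \<gamma> (axis i 1) (axis j 1)"
  have pointwise: "wedge (\<lambda>V. ?g i j / 2 * complex_of_real (V$i)) (\<lambda>V. complex_of_real (V$j)) X Y =
      (X$i * Y$j) *\<^sub>R ?g i j / 2 - (Y$i * X$j) *\<^sub>R ?g i j / 2" for i j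
    by (simp add: wedge_def complex_scaleR_eq_mult algebra_simps)
  have "(\<Sum>i\<in>UNIV. \<Sum>j\<in>UNIV.
      wedge (\<lambda>V. ?g i j / 2 * complex_of_real (V$i)) (\<lambda>V. complex_of_real (V$j)) X Y) =
      (\<Sum>i\<in>UNIV. \<Sum>j\<in>UNIV. (X$i * Y$j) *\<^sub>R ?g i j) / 2 - (\<Sum>i\<in>UNIV. \<Sum>j\<in>UNIV. (Y$i * X$j) *\<^sub>R ?g i j) / 2"
    unfolding pointwise by (simp only: sum_subtractf sum_divide_distrib)
  also have "\<dots> = \<gamma> X Y / 2 - \<gamma> Y X / 2"
    using bilinear_vec_expansion[OF assms(1), of X Y] bilinear_vec_expansion[OF assms(1), of Y X] by simp
  also have "\<dots> = \<gamma> X Y"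
    using alternating[of Y X] by simp
  finally show ?thesis ..
qed

lemma has_type_decomposition_alternating:
  assumes J: "J \<in> acs" and "bilinear \<gamma>" and "\<And>X Y. \<gamma> X Y = - \<gamma> Y X"
  shows "has_type_decomposition J \<gamma>"
proof -
  have coord: "(\<lambda>V. c * complex_of_real (V$i)) = (\<lambda>V. c * coord10 J i V + c * coord01 J i V)"
    "(\<lambda>V. complex_of_real (V$j)) = (\<lambda>V. coord10 J j V + coord01 J j V)" for c i j
    by (simp_all add: coord10_add_coord01 flip: distrib_left)
  have wedges: "has_type_decomposition J (wedge (\<lambda>V. c * complex_of_real (V$i)) (\<lambda>V. complex_of_real (V$j)))"
    for c i j
    unfolding coord using J
    by (intro has_type_decomposition_wedge L10_scale L01_scale coord10_in_L10 coord01_in_L01)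
  have "has_type_decomposition J (\<lambda>X Y. \<Sum>i\<in>UNIV. \<Sum>j\<in>UNIV.
      wedge (\<lambda>V. \<gamma> (axis i 1) (axis j 1) / 2 * complex_of_real (V$i)) (\<lambda>V. complex_of_real (V$j)) X Y)"
    by (intro has_type_decomposition_sum wedges) simp_all
  moreover have "\<gamma> = (\<lambda>X Y. \<Sum>i\<in>UNIV. \<Sum>j\<in>UNIV.
      wedge (\<lambda>V. \<gamma> (axis i 1) (axis j 1) / 2 * complex_of_real (V$i)) (\<lambda>V. complex_of_real (V$j)) X Y)"
    by (intro ext alternating_eq_sum_wedges[OF assms(2,3)])
  ultimately show ?thesis
    by simp
qed

definition proj02 :: "real^'n^'n \<Rightarrow> 'n form2 \<Rightarrow> 'n form2" where
  "proj02 J \<gamma> = (\<lambda>X Y. (\<gamma> X Y + \<i> * \<gamma> (J *v X) Y + \<i> * \<gamma> X (J *v Y) - \<gamma> (J *v X) (J *v Y)) / 4)"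

definition proj11 :: "real^'n^'n \<Rightarrow> 'n form2 \<Rightarrow> 'n form2" where
  "proj11 J \<gamma> = (\<lambda>X Y. (\<gamma> X Y + \<gamma> (J *v X) (J *v Y)) / 2)"

lemma proj_type_decomposition:
  assumes "a \<in> L20 J" "b \<in> L11 J" "c \<in> L02 J"
  shows "proj02 J (\<lambda>X Y. a X Y + b X Y + c X Y) = c"
    and "proj11 J (\<lambda>X Y. a X Y + b X Y + c X Y) = b"
proof -
  note spans = assms[unfolded L20_eq_wedge_span L11_eq_wedge_span L02_eq_wedge_span]
  have eigen: "a (J *v X) (J *v Y) = - a X Y" "a (J *v X) Y + a X (J *v Y) = 2 * \<i> * a X Y"
    "b (J *v X) (J *v Y) = b X Y" "b (J *v X) Y + b X (J *v Y) = 0"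
    "c (J *v X) (J *v Y) = - c X Y" "c (J *v X) Y + c X (J *v Y) = - 2 * \<i> * c X Y" for X Y
    using wedge_span_mult_J_J[OF spans(1) L10_mult_J L10_mult_J, where X=X and Y=Y]
      wedge_span_mult_J_add[OF spans(1) L10_mult_J L10_mult_J, where X=X and Y=Y]
      wedge_span_mult_J_J[OF spans(2) L10_mult_J L01_mult_J, where X=X and Y=Y]
      wedge_span_mult_J_add[OF spans(2) L10_mult_J L01_mult_J, where X=X and Y=Y]
      wedge_span_mult_J_J[OF spans(3) L01_mult_J L01_mult_J, where X=X and Y=Y]
      wedge_span_mult_J_add[OF spans(3) L01_mult_J L01_mult_J, where X=X and Y=Y]
    by simp_all
  have "proj02 J (\<lambda>X Y. a X Y + b X Y + c X Y) X Y = c X Y" for X Y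
  proof -
    have "proj02 J (\<lambda>X Y. a X Y + b X Y + c X Y) X Y =
      ((a X Y + b X Y + c X Y) + \<i> * ((a (J *v X) Y + a X (J *v Y)) + (b (J *v X) Y + b X (J *v Y))
        + (c (J *v X) Y + c X (J *v Y)))
       - (a (J *v X) (J *v Y) + b (J *v X) (J *v Y) + c (J *v X) (J *v Y))) / 4"
      by (simp add: proj02_def algebra_simps)
    also have "\<dots> = c X Y"
      by (simp only: eigen) (simp add: field_simps)
    finally show ?thesis .
  qed
  then show "proj02 J (\<lambda>X Y. a X Y + b X Y + c X Y) = c"
    by (simp add: fun_eq_iff)
  show "proj11 J (\<lambda>X Y. a X Y + b X Y + c X Y) = b"
    by (simp add: proj11_def eigen fun_eq_iff field_simps)
qed

lemma comp02_eq_proj02: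
  assumes "has_type_decomposition J \<gamma>"
  shows "comp02 J \<gamma> = proj02 J \<gamma>"
  unfolding comp02_def
proof (rule the_equality)
  obtain a b c where abc: "a \<in> L20 J" "b \<in> L11 J" "c \<in> L02 J" "\<gamma> = (\<lambda>X Y. a X Y + b X Y + c X Y)"
    using assms unfolding has_type_decomposition_def by blast
  then show "\<exists>a b. a \<in> L20 J \<and> b \<in> L11 J \<and> proj02 J \<gamma> \<in> L02 J \<and> \<gamma> = (\<lambda>X Y. a X Y + b X Y + proj02 J \<gamma> X Y)"
    using proj_type_decomposition(1)[OF abc(1-3)] by (intro exI conjI) simp_all
qed (auto simp: proj_type_decomposition(1))

lemma comp11_eq_proj11:
  assumes "has_type_decomposition J \<gamma>"
  shows "comp11 J \<gamma> = proj11 J \<gamma>"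
  unfolding comp11_def
proof (rule the_equality)
  obtain a b c where abc: "a \<in> L20 J" "b \<in> L11 J" "c \<in> L02 J" "\<gamma> = (\<lambda>X Y. a X Y + b X Y + c X Y)"
    using assms unfolding has_type_decomposition_def by blast
  then show "\<exists>a c. a \<in> L20 J \<and> proj11 J \<gamma> \<in> L11 J \<and> c \<in> L02 J \<and> \<gamma> = (\<lambda>X Y. a X Y + proj11 J \<gamma> X Y + c X Y)"
    using proj_type_decomposition(2)[OF abc(1-3)] by (intro exI conjI) simp_all
qed (auto simp: proj_type_decomposition(2))

lemma proj11_in_L11:
  assumes "has_type_decomposition J \<gamma>"
  shows "proj11 J \<gamma> \<in> L11 J"
proof -
  obtain a b c where abc: "a \<in> L20 J" "b \<in> L11 J" "c \<in> L02 J" "\<gamma> = (\<lambda>X Y. a X Y + b X Y + c X Y)"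
    using assms unfolding has_type_decomposition_def by blast
  then show ?thesis
    using proj_type_decomposition(2)[OF abc(1-3)] by simp
qed

section \<open>The action of \<theta> on (1,1)-forms\<close>

(*
  For b = \<Sum>k. \<alpha>_k \<and> \<beta>_k of type (1,1), tensor11 J b = \<Sum>k. \<alpha>_k \<otimes> \<beta>_k (tensor11_sum_wedges),
  so theta11_explicit computes theta11 without choosing a representation of b.
*)
definition tensor11 :: "real^'n^'n \<Rightarrow> 'n form2 \<Rightarrow> 'n form2" where
  "tensor11 J \<gamma> = (\<lambda>Z W. (\<gamma> Z W + \<i> * \<gamma> Z (J *v W) - \<i> * \<gamma> (J *v Z) W + \<gamma> (J *v Z) (J *v W)) / 4)"

definition theta11_explicit :: "real^'n^'n \<Rightarrow> ('n form1 \<Rightarrow> 'n form1) \<Rightarrow> 'n form2 \<Rightarrow> 'n form2" where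
  "theta11_explicit J \<theta> b = (\<lambda>X Y. \<theta> (\<lambda>Z. tensor11 J b Z Y) X - \<theta> (\<lambda>Z. tensor11 J b Z X) Y)"

lemma tensor11_sum_wedges:
  assumes "\<forall>k<m. \<alpha> k \<in> L10 J \<and> \<beta> k \<in> L01 J"
  shows "tensor11 J (sum_wedges m \<alpha> \<beta>) Z W = (\<Sum>k<m. \<beta> k W * \<alpha> k Z)"
proof -
  have "tensor11 J (sum_wedges m \<alpha> \<beta>) Z W = (\<Sum>k<m. (wedge (\<alpha> k) (\<beta> k) Z W
      + \<i> * wedge (\<alpha> k) (\<beta> k) Z (J *v W) - \<i> * wedge (\<alpha> k) (\<beta> k) (J *v Z) W
      + wedge (\<alpha> k) (\<beta> k) (J *v Z) (J *v W)) / 4)"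
    unfolding tensor11_def sum_wedges_def
    by (simp only: sum_divide_distrib[symmetric] sum.distrib sum_subtractf sum_distrib_left[symmetric])
  also have "\<dots> = (\<Sum>k<m. \<beta> k W * \<alpha> k Z)"
    using assms by (intro sum.cong refl) (simp add: wedge_def L10_mult_J L01_mult_J field_simps)
  finally show ?thesis .
qed

lemma tensor11_in_L10:
  assumes "b \<in> L11 J"
  shows "(\<lambda>Z. tensor11 J b Z W) \<in> L10 J"
proof -
  obtain m \<alpha> \<beta> where b: "b = sum_wedges m \<alpha> \<beta>" and types: "\<forall>k<m. \<alpha> k \<in> L10 J \<and> \<beta> k \<in> L01 J"
    using assms unfolding L11_def by blast
  have "(\<lambda>Z. \<Sum>k<m. \<beta> k W * \<alpha> k Z) \<in> L10 J"
    using types by (intro L10_sum L10_scale) simp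
  then show ?thesis
    unfolding b tensor11_sum_wedges[OF types] .
qed

lemma is_hom_add: "is_hom J \<theta> \<Longrightarrow> \<omega> \<in> L10 J \<Longrightarrow> \<omega>' \<in> L10 J \<Longrightarrow>
    \<theta> (\<lambda>x. \<omega> x + \<omega>' x) = (\<lambda>x. \<theta> \<omega> x + \<theta> \<omega>' x)"
  by (simp add: is_hom_def)

lemma is_hom_scale: "is_hom J \<theta> \<Longrightarrow> \<omega> \<in> L10 J \<Longrightarrow> \<theta> (\<lambda>x. c * \<omega> x) = (\<lambda>x. c * \<theta> \<omega> x)"
  by (simp add: is_hom_def)

lemma is_hom_sum:
  fixes m :: nat
  assumes hom: "is_hom J \<theta>" and "\<forall>k<m. \<alpha> k \<in> L10 J"
  shows "\<theta> (\<lambda>Z. \<Sum>k<m. c k * \<alpha> k Z) = (\<lambda>X. \<Sum>k<m. c k * \<theta> (\<alpha> k) X)"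
  using assms(2)
proof (induction m)
  case 0
  show ?case
    using is_hom_scale[OF hom L10_zero, of 0] by simp
next
  case (Suc m)
  have S: "(\<lambda>Z. \<Sum>k<m. c k * \<alpha> k Z) \<in> L10 J" and A: "\<alpha> m \<in> L10 J"
    using Suc.prems by (auto intro!: L10_sum L10_scale)
  have "\<theta> (\<lambda>Z. \<Sum>k<Suc m. c k * \<alpha> k Z) = \<theta> (\<lambda>Z. (\<Sum>k<m. c k * \<alpha> k Z) + c m * \<alpha> m Z)"
    by simp
  also have "\<dots> = (\<lambda>X. \<theta> (\<lambda>Z. \<Sum>k<m. c k * \<alpha> k Z) X + \<theta> (\<lambda>Z. c m * \<alpha> m Z) X)"
    using is_hom_add[OF hom S L10_scale[OF A]] by simp
  also have "\<dots> = (\<lambda>X. \<Sum>k<Suc m. c k * \<theta> (\<alpha> k) X)"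
    using Suc is_hom_scale[OF hom A] by simp
  finally show ?case .
qed

lemma theta11_explicit_sum_wedges:
  assumes hom: "is_hom J \<theta>" and types: "\<forall>k<m. \<alpha> k \<in> L10 J \<and> \<beta> k \<in> L01 J"
  shows "theta11_explicit J \<theta> (sum_wedges m \<alpha> \<beta>) = sum_wedges m (\<lambda>k. \<theta> (\<alpha> k)) \<beta>"
proof -
  have "\<theta> (\<lambda>Z. tensor11 J (sum_wedges m \<alpha> \<beta>) Z W) = (\<lambda>X. \<Sum>k<m. \<beta> k W * \<theta> (\<alpha> k) X)" for W
    using is_hom_sum[OF hom, of m \<alpha> "\<lambda>k. \<beta> k W"] types by (simp add: tensor11_sum_wedges[OF types])
  then show ?thesis
    by (simp add: theta11_explicit_def sum_wedges_def wedge_def fun_eq_iff sum_subtractf algebra_simps)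
qed

lemma theta11_eq_explicit:
  assumes hom: "is_hom J \<theta>" and "b \<in> L11 J"
  shows "theta11 J \<theta> b = theta11_explicit J \<theta> b"
  unfolding theta11_def
proof (rule the_equality)
  obtain m \<alpha> \<beta> where b: "b = sum_wedges m \<alpha> \<beta>" and types: "\<forall>k<m. \<alpha> k \<in> L10 J \<and> \<beta> k \<in> L01 J"
    using assms(2) unfolding L11_def by blast
  then show "\<exists>m \<alpha> \<beta>. (\<forall>k<m. \<alpha> k \<in> L10 J \<and> \<beta> k \<in> L01 J) \<and> b = sum_wedges m \<alpha> \<beta> \<and>
      theta11_explicit J \<theta> b = sum_wedges m (\<lambda>k. \<theta> (\<alpha> k)) \<beta>"
    using theta11_explicit_sum_wedges[OF hom types] by blast
qed (use theta11_explicit_sum_wedges[OF hom] in auto)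

section \<open>The exterior derivative and integrability\<close>

lemma lie_bracket_bilinear: "lie_bracket br \<Longrightarrow> bilinear br"
  unfolding lie_bracket_def bilinear_def by (elim conjE) (intro conjI)

lemma dform_bilinear:
  assumes "lie_bracket br" "linear \<phi>"
  shows "bilinear (dform br \<phi>)"
proof -
  have "linear (br X)" "linear (\<lambda>X. br X Y)" for X Y
    using lie_bracket_bilinear[OF assms(1)] by (simp_all add: bilinear_def)
  then have "linear (\<lambda>Y. - \<phi> (br X Y))" "linear (\<lambda>X. - \<phi> (br X Y))" for X Y
    using linear_compose_neg[OF linear_compose[OF _ assms(2)]] unfolding o_def by blast+
  then show ?thesis
    by (simp add: bilinear_def dform_def)
qed

lemma dform_alternating:
  assumes "lie_bracket br" "linear \<phi>"
  shows "dform br \<phi> X Y = - dform br \<phi> Y X"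
proof -
  have "br X Y = - br Y X"
    using assms(1) unfolding lie_bracket_def by blast
  then show ?thesis
    by (simp add: dform_def linear_neg[OF assms(2)])
qed

lemma dform_has_type_decomposition:
  "J \<in> acs \<Longrightarrow> lie_bracket br \<Longrightarrow> linear \<phi> \<Longrightarrow> has_type_decomposition J (dform br \<phi>)"
  by (intro has_type_decomposition_alternating dform_bilinear dform_alternating)

lemma proj02_dform_add:
  "proj02 J (dform br (\<lambda>x. \<alpha> x + \<beta> x)) X Y = proj02 J (dform br \<alpha>) X Y + proj02 J (dform br \<beta>) X Y"
  by (simp add: proj02_def dform_def add_divide_distrib[symmetric] algebra_simps)

lemma proj02_dform_L10:
  assumes "integrable br J" "\<phi> \<in> L10 J"
  shows "proj02 J (dform br \<phi>) X Y = 0"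
proof -
  have "br (J *v X) (J *v Y) = br X Y + J *v br (J *v X) Y + J *v br X (J *v Y)"
    using assms(1) by (simp add: integrable_def)
  then show ?thesis
    unfolding proj02_def dform_def
    by (simp add: linear_add[OF L10_linear[OF assms(2)]] L10_mult_J[OF assms(2)] algebra_simps)
qed

lemma tensor11_proj11_eq:
  assumes J: "J \<in> acs" and "bilinear \<gamma>" and no02: "proj02 J \<gamma> U W = 0"
  shows "2 * \<i> * tensor11 J (proj11 J \<gamma>) U W = \<i> * \<gamma> U W - \<gamma> U (J *v W)"
proof -
  have "\<gamma> (J *v U) (J *v W) = \<gamma> U W + \<i> * \<gamma> (J *v U) W + \<i> * \<gamma> U (J *v W)"
    using no02 by (simp add: proj02_def algebra_simps)
  then show ?thesis
    using assms(2)
    by (simp add: tensor11_def proj11_def acs_mult_twice[OF J] bilinear_lneg bilinear_rneg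
        field_simps)
qed

lemma proj02_perturbation:
  fixes \<gamma> :: "('n::finite) form2" and J' :: "real^'n^'n"
  assumes J: "J \<in> acs" and bil: "bilinear \<gamma>" and alternating: "\<And>X Y. \<gamma> X Y = - \<gamma> Y X"
    and no02: "\<And>X Y. proj02 J \<gamma> X Y = 0"
  defines "D V \<equiv> J' *v V - J *v V" and "T \<equiv> tensor11 J (proj11 J \<gamma>)"
  shows "4 * proj02 J' \<gamma> X Y = 2 * \<i> * T (D X) Y - 2 * \<i> * T (D Y) X - \<gamma> (D X) (D Y)"
proof -
  have J': "J' *v V = J *v V + D V" for V
    by (simp add: D_def)
  have "4 * proj02 J' \<gamma> X Y = 4 * proj02 J \<gamma> X Y
      + (\<i> * \<gamma> (D X) Y - \<gamma> (D X) (J *v Y)) - (\<i> * \<gamma> (D Y) X - \<gamma> (D Y) (J *v X)) - \<gamma> (D X) (D Y)"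
    using alternating[of X "D Y"] alternating[of "J *v X" "D Y"]
    by (simp add: proj02_def J' bilinear_ladd[OF bil] bilinear_radd[OF bil] field_simps)
  then show ?thesis
    by (simp add: no02 T_def tensor11_proj11_eq[OF J bil no02])
qed

section \<open>Difference quotients\<close>

lemma difference_quotient_tendsto:
  fixes f :: "real \<Rightarrow> 'a::real_normed_vector"
  assumes "(f has_vector_derivative v) (at 0)" and f0: "f 0 = 0"
  shows "((\<lambda>t. f t /\<^sub>R t) \<longlongrightarrow> v) (at 0)"
proof -
  have "((\<lambda>h. norm (f (0 + h) - f 0 - h *\<^sub>R v) / norm h) \<longlongrightarrow> 0) (at 0)"
    using assms(1) by (simp add: has_vector_derivative_def has_derivative_at)
  then have "((\<lambda>h. norm (f h /\<^sub>R h - v)) \<longlongrightarrow> 0) (at 0)"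
  proof (rule Lim_transform_eventually)
    show "\<forall>\<^sub>F h in at 0. norm (f (0 + h) - f 0 - h *\<^sub>R v) / norm h = norm (f h /\<^sub>R h - v)"
    proof (rule eventually_mono[OF eventually_neq_at_within[of 0 0 UNIV]])
      fix h :: real
      assume "h \<noteq> 0"
      then have "f h /\<^sub>R h - v = inverse h *\<^sub>R (f h - h *\<^sub>R v)"
        by (simp add: algebra_simps)
      then show "norm (f (0 + h) - f 0 - h *\<^sub>R v) / norm h = norm (f h /\<^sub>R h - v)"
        using f0 by (simp add: divide_inverse mult.commute)
    qed
  qed
  then show ?thesis
    by (simp add: tendsto_norm_zero_iff LIM_zero_iff)
qed

lemma has_vector_derivative_unique_eventually_eq:
  assumes "(f has_vector_derivative a) (at 0)" "(g has_vector_derivative b) (at 0)"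
    and "\<forall>\<^sub>F t in at 0. f t = g t" "f 0 = g 0"
  shows "a = b"
proof -
  have "(g has_vector_derivative a) (at 0)"
    using has_derivative_transform_eventually[of f "\<lambda>x. x *\<^sub>R a" 0 UNIV g] assms
    by (simp add: has_vector_derivative_def)
  then show ?thesis
    using assms(2) vector_derivative_unique_at by blast
qed

lemma bilinear_tendsto:
  fixes h :: "'a::euclidean_space \<Rightarrow> 'b::euclidean_space \<Rightarrow> 'c::real_normed_vector"
  assumes "bilinear h" "(f \<longlongrightarrow> l) F" "(g \<longlongrightarrow> m) F"
  shows "((\<lambda>x. h (f x) (g x)) \<longlongrightarrow> h l m) F"
  using assms(2,3) assms(1)[unfolded bilinear_conv_bounded_bilinear] by (rule Lim_bilinear)

lemma linear_family_quotient_tendsto: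
  fixes \<beta> :: "real \<Rightarrow> real^'n \<Rightarrow> 'a::real_normed_vector"
  assumes "\<forall>\<^sub>F t in at 0. linear (\<beta> t)"
    and "\<And>x. ((\<lambda>t. \<beta> t x) has_vector_derivative \<theta> x) (at 0)" "\<And>x. \<beta> 0 x = 0"
    and "linear \<theta>" and "(V \<longlongrightarrow> V0) (at 0)"
  shows "((\<lambda>t. \<beta> t (V t) /\<^sub>R t) \<longlongrightarrow> \<theta> V0) (at 0)"
proof -
  have "((\<lambda>t. \<beta> t (axis i 1) /\<^sub>R t) \<longlongrightarrow> \<theta> (axis i 1)) (at 0)" for i
    using assms(2,3) by (rule difference_quotient_tendsto)
  then have "((\<lambda>t. \<Sum>i\<in>UNIV. V t $ i *\<^sub>R (\<beta> t (axis i 1) /\<^sub>R t)) \<longlongrightarrow>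
      (\<Sum>i\<in>UNIV. V0 $ i *\<^sub>R \<theta> (axis i 1))) (at 0)"
    by (intro tendsto_intros assms(5))
  moreover have "\<forall>\<^sub>F t in at 0. (\<Sum>i\<in>UNIV. V t $ i *\<^sub>R (\<beta> t (axis i 1) /\<^sub>R t)) = \<beta> t (V t) /\<^sub>R t"
    using assms(1)
    by eventually_elim (simp add: linear_vec_expansion[of _ "V _"] scaleR_sum_right mult.commute)
  ultimately show ?thesis
    unfolding linear_vec_expansion[OF assms(4), of V0, symmetric] by (rule Lim_transform_eventually)
qed

section \<open>Paths of complex structures\<close>

lemma abs_component_le_lift:
  assumes J: "J \<in> acs" and lift: "is_lift J J' (coord10 J j) \<beta>"
  shows "\<bar>(J' *v X - J *v X)$j\<bar> \<le> 4 * cmod (\<beta> X) + 2 * cmod (\<beta> (J' *v X - J *v X))"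
proof -
  let ?V = "J' *v X - J *v X"
  have difference: "coord10 J j ?V = 2 * \<i> * \<beta> X - \<beta> ?V"
    using coord10_in_L10[OF J] lift by (rule is_lift_apply_difference)
  have "\<bar>?V$j\<bar> = 2 * \<bar>Re (coord10 J j ?V)\<bar>"
    by (simp add: Re_coord10)
  also have "\<dots> \<le> 2 * cmod (coord10 J j ?V)"
    using abs_Re_le_cmod by simp
  also have "\<dots> \<le> 2 * (cmod (2 * \<i> * \<beta> X) + cmod (\<beta> ?V))"
    unfolding difference using norm_triangle_ineq4[of "2 * \<i> * \<beta> X" "\<beta> ?V"] by simp
  finally show ?thesis
    by (simp add: norm_mult)
qed

lemma norm_difference_le_lifts:
  fixes J J' :: "real^'n^'n" and \<beta> :: "'n \<Rightarrow> 'n form1"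
  assumes J: "J \<in> acs" and lifts: "\<And>j. is_lift J J' (coord10 J j) (\<beta> j)"
    and small: "\<And>j i. cmod (\<beta> j (axis i 1)) \<le> 1 / (4 * real CARD('n))"
  shows "norm (J' *v X - J *v X) \<le> 8 * (\<Sum>j\<in>UNIV. cmod (\<beta> j X))"
proof -
  define V where "V = J' *v X - J *v X"
  define S where "S = (\<Sum>j\<in>UNIV. \<bar>V$j\<bar>)"
  define C where "C = real CARD('n)"
  have "C > 0"
    by (simp add: C_def)
  have bound: "cmod (\<beta> j V) \<le> S / (4 * C)" for j
  proof -
    have "linear (\<beta> j)"
      using lifts[of j] unfolding is_lift_def by (blast intro: L01_linear)
    then have "cmod (\<beta> j V) \<le> (\<Sum>i\<in>UNIV. \<bar>V$i\<bar> * cmod (\<beta> j (axis i 1)))"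
      by (rule norm_linear_le_sum)
    also have "\<dots> \<le> (\<Sum>i\<in>UNIV. \<bar>V$i\<bar> * (1 / (4 * C)))"
      by (intro sum_mono mult_left_mono) (simp_all add: small C_def)
    finally show ?thesis
      by (simp add: S_def sum_divide_distrib)
  qed
  have coordinate: "\<bar>V$j\<bar> \<le> 4 * cmod (\<beta> j X) + 2 * cmod (\<beta> j V)" for j
    unfolding V_def using J lifts by (rule abs_component_le_lift)
  have "2 * (S / (4 * C)) = S / (2 * C)"
    by simp
  then have "\<bar>V$j\<bar> \<le> 4 * cmod (\<beta> j X) + S / (2 * C)" for j
    using bound[of j] coordinate[of j] by linarith
  then have "S \<le> (\<Sum>j\<in>UNIV. 4 * cmod (\<beta> j X) + S / (2 * C))"
    unfolding S_def by (intro sum_mono)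
  also have "\<dots> = 4 * (\<Sum>j\<in>UNIV. cmod (\<beta> j X)) + S / 2"
    using \<open>C > 0\<close> by (simp add: sum.distrib sum_distrib_left C_def)
  finally have "S \<le> 8 * (\<Sum>j\<in>UNIV. cmod (\<beta> j X))"
    by simp
  then show ?thesis
    using norm_le_l1_cart[of V] by (simp add: V_def S_def)
qed

lemma L01_inter_L10_trivial:
  fixes J J' :: "real^'n^'n"
  assumes close: "\<And>k i. \<bar>(J' *v axis k 1 - J *v axis k 1) $ i\<bar> \<le> 1 / real CARD('n)"
    and \<delta>: "\<delta> \<in> L01 J" "\<delta> \<in> L10 J'"
  shows "\<delta> = (\<lambda>x. 0)"
proof -
  define S where "S = (\<Sum>i\<in>UNIV. cmod (\<delta> (axis i 1)))"
  define C where "C = real CARD('n)"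
  have "C > 0"
    by (simp add: C_def)
  have "2 * cmod (\<delta> (axis k 1)) \<le> S / C" for k
  proof -
    have "2 * cmod (\<delta> (axis k 1)) = cmod (\<delta> (J' *v axis k 1 - J *v axis k 1))"
      using L01_inter_L10_apply_difference[OF \<delta>] by (simp add: norm_mult)
    also have "\<dots> \<le> (\<Sum>i\<in>UNIV. \<bar>(J' *v axis k 1 - J *v axis k 1) $ i\<bar> * cmod (\<delta> (axis i 1)))"
      using \<delta>(1) by (intro norm_linear_le_sum L01_linear)
    also have "\<dots> \<le> (\<Sum>i\<in>UNIV. (1 / C) * cmod (\<delta> (axis i 1)))"
      by (intro sum_mono mult_right_mono) (simp_all add: close[simplified] C_def)
    finally show ?thesis
      by (simp add: S_def sum_divide_distrib)
  qed
  then have "2 * S \<le> (\<Sum>k\<in>(UNIV::'n set). S / C)"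
    unfolding S_def sum_distrib_left by (intro sum_mono) (simp add: S_def)
  also have "\<dots> = S"
    using \<open>C > 0\<close> by (simp add: C_def)
  finally have "S = 0"
    using sum_nonneg[of UNIV "\<lambda>i. cmod (\<delta> (axis i 1))"] by (simp add: S_def)
  then have "\<forall>i\<in>UNIV. cmod (\<delta> (axis i 1)) = 0"
    using sum_nonneg_eq_0_iff[of UNIV "\<lambda>i. cmod (\<delta> (axis i 1))"] by (simp add: S_def)
  then have "\<delta> x = 0" for x
    using linear_vec_expansion[OF L01_linear[OF \<delta>(1)], of x] by simp
  then show ?thesis
    by (simp add: fun_eq_iff)
qed

(*
  lift \<psi> t is the paper's conjugate of \<tau>(t) for the (1,0)-form \<psi>. No continuity of Jt is assumed:
  path_difference_tendsto_0 derives it from the lifts of the forms coord10 J j.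
*)
locale lifted_path =
  fixes J :: "real^'n::finite^'n" and Jt :: "real \<Rightarrow> real^'n^'n"
    and \<theta> :: "'n form1 \<Rightarrow> 'n form1" and lift :: "'n form1 \<Rightarrow> real \<Rightarrow> 'n form1"
  assumes acs: "J \<in> acs"
    and eventually_is_lift: "\<And>\<psi>. \<psi> \<in> L10 J \<Longrightarrow> \<forall>\<^sub>F t in at 0. is_lift J (Jt t) \<psi> (lift \<psi> t)"
    and lift_at_0: "\<And>\<psi> x. \<psi> \<in> L10 J \<Longrightarrow> lift \<psi> 0 x = 0"
    and lift_has_derivative:
      "\<And>\<psi> x. \<psi> \<in> L10 J \<Longrightarrow> ((\<lambda>t. lift \<psi> t x) has_vector_derivative \<theta> \<psi> x) (at 0)"
begin

lemma lift_tendsto_0: "\<psi> \<in> L10 J \<Longrightarrow> ((\<lambda>t. lift \<psi> t x) \<longlongrightarrow> 0) (at 0)"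
  using has_vector_derivative_continuous[OF lift_has_derivative] lift_at_0 by (simp add: isCont_def)

lemma theta_in_L01:
  assumes "\<psi> \<in> L10 J"
  shows "\<theta> \<psi> \<in> L01 J"
proof -
  have lift_L01: "\<forall>\<^sub>F t in at 0. lift \<psi> t \<in> L01 J"
    using eventually_is_lift[OF assms] by eventually_elim (simp add: is_lift_def)
  have derivative_eq: "\<theta> \<psi> y = c * \<theta> \<psi> x"
    if "\<forall>\<^sub>F t in at 0. lift \<psi> t y = c * lift \<psi> t x" for x y c
    using that lift_at_0[OF assms]
    by (intro has_vector_derivative_unique_eventually_eq[OF lift_has_derivative[OF assms]
          has_vector_derivative_mult_right[OF lift_has_derivative[OF assms]]]) simp_all
  have add: "\<theta> \<psi> (x + y) = \<theta> \<psi> x + \<theta> \<psi> y" for x y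
  proof (rule has_vector_derivative_unique_eventually_eq[OF lift_has_derivative[OF assms]
        has_vector_derivative_add[OF lift_has_derivative[OF assms] lift_has_derivative[OF assms]]])
    show "\<forall>\<^sub>F t in at 0. lift \<psi> t (x + y) = lift \<psi> t x + lift \<psi> t y"
      using lift_L01 by eventually_elim (simp add: linear_add L01_linear)
  qed (simp add: lift_at_0[OF assms])
  have "\<theta> \<psi> (r *\<^sub>R x) = complex_of_real r * \<theta> \<psi> x" for r x
    using lift_L01
    by (intro derivative_eq, eventually_elim) (simp add: linear_scale L01_linear complex_scaleR_eq_mult)
  moreover have "\<theta> \<psi> (J *v x) = - \<i> * \<theta> \<psi> x" for x
    using lift_L01 by (intro derivative_eq, eventually_elim) (simp add: L01_mult_J)
  ultimately show ?thesis
    using add by (simp add: L01_def linear_iff complex_scaleR_eq_mult)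
qed

lemma lift_quotient_tendsto:
  assumes "\<psi> \<in> L10 J" "(V \<longlongrightarrow> V0) (at 0)"
  shows "((\<lambda>t. lift \<psi> t (V t) /\<^sub>R t) \<longlongrightarrow> \<theta> \<psi> V0) (at 0)"
proof (rule linear_family_quotient_tendsto[OF _ lift_has_derivative[OF assms(1)]
      lift_at_0[OF assms(1)] _ assms(2)])
  show "\<forall>\<^sub>F t in at 0. linear (lift \<psi> t)"
    using eventually_is_lift[OF assms(1)] by eventually_elim (auto simp: is_lift_def intro: L01_linear)
  show "linear (\<theta> \<psi>)"
    using theta_in_L01[OF assms(1)] by (rule L01_linear)
qed

lemma path_difference_tendsto_0: "((\<lambda>t. Jt t *v X - J *v X) \<longlongrightarrow> 0) (at 0)"
proof -
  define C where "C = real CARD('n)"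
  have "C > 0"
    by (simp add: C_def)
  let ?\<beta> = "\<lambda>j. lift (coord10 J j)"
  have coord: "coord10 J j \<in> L10 J" for j
    using acs by (rule coord10_in_L10)
  have lifts: "\<forall>\<^sub>F t in at 0. \<forall>j. is_lift J (Jt t) (coord10 J j) (?\<beta> j t)"
    using coord by (intro eventually_all_finite eventually_is_lift)
  have small: "\<forall>\<^sub>F t in at 0. \<forall>j i. cmod (?\<beta> j t (axis i 1)) \<le> 1 / (4 * C)"
  proof (intro eventually_all_finite)
    fix j i
    have "((\<lambda>t. cmod (?\<beta> j t (axis i 1))) \<longlongrightarrow> 0) (at 0)"
      using tendsto_norm[OF lift_tendsto_0[OF coord]] by simp
    then have "\<forall>\<^sub>F t in at 0. cmod (?\<beta> j t (axis i 1)) < 1 / (4 * C)"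
      using \<open>C > 0\<close> by (elim order_tendstoD(2)) simp
    then show "\<forall>\<^sub>F t in at 0. cmod (?\<beta> j t (axis i 1)) \<le> 1 / (4 * C)"
      by (rule eventually_mono) simp
  qed
  have "\<forall>\<^sub>F t in at 0. norm (Jt t *v X - J *v X) \<le> 8 * (\<Sum>j\<in>UNIV. cmod (?\<beta> j t X))"
    using lifts small by eventually_elim (rule norm_difference_le_lifts[OF acs], simp_all add: C_def)
  moreover have "((\<lambda>t. 8 * (\<Sum>j\<in>UNIV. cmod (?\<beta> j t X))) \<longlongrightarrow> 0) (at 0)"
    using tendsto_norm_zero[OF lift_tendsto_0[OF coord]]
    by (intro tendsto_mult_right_zero tendsto_null_sum)
  ultimately show ?thesis
    by (rule Lim_null_comparison)
qed

lemma path_tendsto: "((\<lambda>t. Jt t *v X) \<longlongrightarrow> J *v X) (at 0)"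
  using path_difference_tendsto_0 by (simp add: LIM_zero_iff)

lemma eventually_L01_inter_L10_trivial:
  "\<forall>\<^sub>F t in at 0. \<forall>\<delta>. \<delta> \<in> L01 J \<and> \<delta> \<in> L10 (Jt t) \<longrightarrow> \<delta> = (\<lambda>x. 0)"
proof -
  have "\<forall>\<^sub>F t in at 0. \<forall>k i. \<bar>(Jt t *v axis k 1 - J *v axis k 1) $ i\<bar> \<le> 1 / real CARD('n)"
  proof (intro eventually_all_finite)
    fix k i
    have "((\<lambda>t. \<bar>(Jt t *v axis k 1 - J *v axis k 1) $ i\<bar>) \<longlongrightarrow> 0) (at 0)"
      using tendsto_rabs[OF tendsto_vec_nth[OF path_difference_tendsto_0[of "axis k 1"]]] by simp
    then have "\<forall>\<^sub>F t in at 0. \<bar>(Jt t *v axis k 1 - J *v axis k 1) $ i\<bar> < 1 / real CARD('n)"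
      by (elim order_tendstoD(2)) simp
    then show "\<forall>\<^sub>F t in at 0. \<bar>(Jt t *v axis k 1 - J *v axis k 1) $ i\<bar> \<le> 1 / real CARD('n)"
      by (rule eventually_mono) simp
  qed
  then show ?thesis
  proof eventually_elim
    case (elim t)
    then show ?case
      using L01_inter_L10_trivial[where J=J and J'="Jt t"] by simp
  qed
qed

lemma eventually_lift_add:
  assumes "\<omega> \<in> L10 J" "\<omega>' \<in> L10 J"
  shows "\<forall>\<^sub>F t in at 0. lift (\<lambda>x. \<omega> x + \<omega>' x) t = (\<lambda>x. lift \<omega> t x + lift \<omega>' t x)"
  using eventually_L01_inter_L10_trivial eventually_is_lift[OF L10_add[OF assms]]
    eventually_is_lift[OF assms(1)] eventually_is_lift[OF assms(2)]
  by eventually_elim (rule is_lift_unique[OF _ _ is_lift_add])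

lemma eventually_lift_scale:
  assumes "\<omega> \<in> L10 J"
  shows "\<forall>\<^sub>F t in at 0. lift (\<lambda>x. c * \<omega> x) t = (\<lambda>x. c * lift \<omega> t x)"
  using eventually_L01_inter_L10_trivial eventually_is_lift[OF L10_scale[OF assms]]
    eventually_is_lift[OF assms]
  by eventually_elim (rule is_lift_unique[OF _ _ is_lift_scale])

lemma theta_is_hom: "is_hom J \<theta>"
proof -
  have "\<theta> (\<lambda>x. \<omega> x + \<omega>' x) x = \<theta> \<omega> x + \<theta> \<omega>' x" if "\<omega> \<in> L10 J" "\<omega>' \<in> L10 J" for \<omega> \<omega>' x
  proof (rule has_vector_derivative_unique_eventually_eq[OF lift_has_derivative[OF L10_add[OF that]]
        has_vector_derivative_add[OF lift_has_derivative[OF that(1)] lift_has_derivative[OF that(2)]]])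
    show "\<forall>\<^sub>F t in at 0. lift (\<lambda>x. \<omega> x + \<omega>' x) t x = lift \<omega> t x + lift \<omega>' t x"
      using eventually_lift_add[OF that] by eventually_elim simp
  qed (simp add: lift_at_0 that L10_add[OF that])
  moreover have "\<theta> (\<lambda>x. c * \<omega> x) x = c * \<theta> \<omega> x" if "\<omega> \<in> L10 J" for \<omega> c x
  proof (rule has_vector_derivative_unique_eventually_eq[OF lift_has_derivative[OF L10_scale[OF that]]
        has_vector_derivative_mult_right[OF lift_has_derivative[OF that]]])
    show "\<forall>\<^sub>F t in at 0. lift (\<lambda>x. c * \<omega> x) t x = c * lift \<omega> t x"
      using eventually_lift_scale[OF that, of c] by eventually_elim simp
  qed (simp add: lift_at_0 that L10_scale[OF that])
  ultimately show ?thesis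
    by (simp add: is_hom_def theta_in_L01 fun_eq_iff)
qed

lemma apply_path_difference_quotient_tendsto:
  assumes "\<psi> \<in> L10 J"
  shows "((\<lambda>t. \<psi> (Jt t *v X - J *v X) /\<^sub>R t) \<longlongrightarrow> 2 * \<i> * \<theta> \<psi> X) (at 0)"
proof -
  have "((\<lambda>t. 2 * \<i> * (lift \<psi> t X /\<^sub>R t) - lift \<psi> t (Jt t *v X - J *v X) /\<^sub>R t) \<longlongrightarrow>
      2 * \<i> * \<theta> \<psi> X - \<theta> \<psi> 0) (at 0)"
    using lift_quotient_tendsto[OF assms tendsto_const, of X]
      lift_quotient_tendsto[OF assms path_difference_tendsto_0]
    by (intro tendsto_intros)
  moreover have "\<theta> \<psi> 0 = 0"
    using theta_in_L01[OF assms] by (simp add: L01_linear linear_0)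
  moreover have "\<forall>\<^sub>F t in at 0. 2 * \<i> * (lift \<psi> t X /\<^sub>R t) - lift \<psi> t (Jt t *v X - J *v X) /\<^sub>R t =
      \<psi> (Jt t *v X - J *v X) /\<^sub>R t"
    using eventually_is_lift[OF assms]
    by eventually_elim (simp add: is_lift_apply_difference[OF assms] scaleR_right_diff_distrib)
  ultimately show ?thesis
    using Lim_transform_eventually by fastforce
qed

lemma path_difference_quotient_convergent: "\<exists>L. ((\<lambda>t. (Jt t *v X - J *v X) /\<^sub>R t) \<longlongrightarrow> L) (at 0)"
proof
  show "((\<lambda>t. (Jt t *v X - J *v X) /\<^sub>R t) \<longlongrightarrow> (\<chi> j. 2 * Re (2 * \<i> * \<theta> (coord10 J j) X))) (at 0)"
  proof (rule vec_tendstoI)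
    fix j
    have "((\<lambda>t. 2 * Re (coord10 J j (Jt t *v X - J *v X) /\<^sub>R t)) \<longlongrightarrow> 2 * Re (2 * \<i> * \<theta> (coord10 J j) X))
        (at 0)"
      by (intro tendsto_intros apply_path_difference_quotient_tendsto coord10_in_L10 acs)
    then show "((\<lambda>t. ((Jt t *v X - J *v X) /\<^sub>R t) $ j) \<longlongrightarrow>
        (\<chi> j. 2 * Re (2 * \<i> * \<theta> (coord10 J j) X)) $ j) (at 0)"
      by (simp add: Re_coord10)
  qed
qed

lemma quadratic_difference_quotient_tendsto_0:
  fixes \<gamma> :: "real^'n \<Rightarrow> real^'n \<Rightarrow> 'a::real_normed_vector"
  assumes "bilinear \<gamma>"
  shows "((\<lambda>t. \<gamma> ((Jt t *v X - J *v X) /\<^sub>R t) (Jt t *v Y - J *v Y)) \<longlongrightarrow> 0) (at 0)"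
proof -
  obtain L where "((\<lambda>t. (Jt t *v X - J *v X) /\<^sub>R t) \<longlongrightarrow> L) (at 0)"
    using path_difference_quotient_convergent by blast
  with assms have "((\<lambda>t. \<gamma> ((Jt t *v X - J *v X) /\<^sub>R t) (Jt t *v Y - J *v Y)) \<longlongrightarrow> \<gamma> L 0) (at 0)"
    using path_difference_tendsto_0[of Y] by (rule bilinear_tendsto)
  then show ?thesis
    using bilinear_rzero[OF assms] by simp
qed
end

lemma proj02_dform_scaleR:
  "proj02 J (dform br \<beta>) X Y /\<^sub>R t = (- (\<beta> (br X Y) /\<^sub>R t) - \<i> * (\<beta> (br (J *v X) Y) /\<^sub>R t)
      - \<i> * (\<beta> (br X (J *v Y)) /\<^sub>R t) + \<beta> (br (J *v X) (J *v Y)) /\<^sub>R t) / 4"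
  by (simp add: proj02_def dform_def complex_scaleR_eq_mult algebra_simps diff_divide_distrib add_divide_distrib)

locale integrable_lifted_path = lifted_path J Jt \<theta> lift
  for J :: "real^'n::finite^'n" and Jt \<theta> lift +
  fixes br :: "real^'n \<Rightarrow> real^'n \<Rightarrow> real^'n"
  assumes lie: "lie_bracket br"
    and integrable: "integrable br J"
    and integrable_path: "\<And>t. integrable br (Jt t)"
begin

lemma proj02_dform_lift_quotient_tendsto:
  assumes "\<omega> \<in> L10 J"
  shows "((\<lambda>t. proj02 (Jt t) (dform br (lift \<omega> t)) X Y /\<^sub>R t) \<longlongrightarrow> proj02 J (dform br (\<theta> \<omega>)) X Y) (at 0)"
proof -
  have "((\<lambda>t. (- (lift \<omega> t (br X Y) /\<^sub>R t) - \<i> * (lift \<omega> t (br (Jt t *v X) Y) /\<^sub>R t)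
      - \<i> * (lift \<omega> t (br X (Jt t *v Y)) /\<^sub>R t) + lift \<omega> t (br (Jt t *v X) (Jt t *v Y)) /\<^sub>R t) / 4)
      \<longlongrightarrow> (- (\<theta> \<omega> (br X Y) /\<^sub>R 1) - \<i> * (\<theta> \<omega> (br (J *v X) Y) /\<^sub>R 1)
        - \<i> * (\<theta> \<omega> (br X (J *v Y)) /\<^sub>R 1) + \<theta> \<omega> (br (J *v X) (J *v Y)) /\<^sub>R 1) / 4) (at 0)"
    unfolding scaleR_one inverse_1
    by (intro tendsto_intros lift_quotient_tendsto[OF assms] bilinear_tendsto[OF lie_bracket_bilinear[OF lie]] path_tendsto tendsto_const) simp
  then show ?thesis
    unfolding proj02_dform_scaleR[symmetric] by (simp only: scaleR_one inverse_1)
qed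

lemma eventually_proj02_dform_lift:
  assumes "\<omega> \<in> L10 J"
  shows "\<forall>\<^sub>F t in at 0. proj02 (Jt t) (dform br (lift \<omega> t)) X Y = - proj02 (Jt t) (dform br \<omega>) X Y"
  using eventually_is_lift[OF assms]
proof eventually_elim
  case (elim t)
  then have "proj02 (Jt t) (dform br (\<lambda>x. \<omega> x + lift \<omega> t x)) X Y = 0"
    by (intro proj02_dform_L10 integrable_path) (simp add: is_lift_def)
  then have "proj02 (Jt t) (dform br \<omega>) X Y + proj02 (Jt t) (dform br (lift \<omega> t)) X Y = 0"
    by (simp only: proj02_dform_add)
  then show ?case
    by (rule minus_unique[symmetric])
qed

lemma eventually_proj02_dform_lift_quotient:
  assumes \<omega>: "\<omega> \<in> L10 J"
  defines "\<gamma> \<equiv> dform br \<omega>" and "T \<equiv> tensor11 J (proj11 J (dform br \<omega>))"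
    and "D t V \<equiv> Jt t *v V - J *v V"
  shows "\<forall>\<^sub>F t in at 0.
    - (2 * \<i> * (T (D t X) Y /\<^sub>R t) - 2 * \<i> * (T (D t Y) X /\<^sub>R t) - \<gamma> (D t X /\<^sub>R t) (D t Y)) =
    4 * (proj02 (Jt t) (dform br (lift \<omega> t)) X Y /\<^sub>R t)"
  using eventually_proj02_dform_lift[OF \<omega>, of X Y]
proof (rule eventually_mono)
  fix t
  assume lifted: "proj02 (Jt t) (dform br (lift \<omega> t)) X Y = - proj02 (Jt t) (dform br \<omega>) X Y"
  have bil: "bilinear \<gamma>"
    unfolding \<gamma>_def using lie \<omega> by (intro dform_bilinear L10_linear)
  have "\<gamma> U V = - \<gamma> V U" for U V
    unfolding \<gamma>_def using lie \<omega> by (intro dform_alternating L10_linear)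
  moreover have "proj02 J \<gamma> U V = 0" for U V
    unfolding \<gamma>_def using integrable \<omega> by (rule proj02_dform_L10)
  ultimately have "4 * proj02 (Jt t) \<gamma> X Y = 2 * \<i> * T (D t X) Y - 2 * \<i> * T (D t Y) X - \<gamma> (D t X) (D t Y)"
    unfolding T_def D_def \<gamma>_def[symmetric] using acs bil by (intro proj02_perturbation)
  then show "- (2 * \<i> * (T (D t X) Y /\<^sub>R t) - 2 * \<i> * (T (D t Y) X /\<^sub>R t) - \<gamma> (D t X /\<^sub>R t) (D t Y)) =
      4 * (proj02 (Jt t) (dform br (lift \<omega> t)) X Y /\<^sub>R t)"
    unfolding lifted \<gamma>_def[symmetric] by (simp add: bilinear_lmul[OF bil] scaleR_right_diff_distrib)
qed

lemma proj02_dform_theta: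
  assumes \<omega>: "\<omega> \<in> L10 J"
  shows "proj02 J (dform br (\<theta> \<omega>)) X Y = theta11_explicit J \<theta> (proj11 J (dform br \<omega>)) X Y"
proof -
  define T where "T = tensor11 J (proj11 J (dform br \<omega>))"
  define a where "a = \<theta> (\<lambda>Z. T Z Y) X"
  define b where "b = \<theta> (\<lambda>Z. T Z X) Y"
  have "(\<lambda>Z. T Z W) \<in> L10 J" for W
    unfolding T_def using acs lie \<omega>
    by (intro tensor11_in_L10 proj11_in_L11 dform_has_type_decomposition L10_linear)
  then have linear_terms: "((\<lambda>t. T (Jt t *v X - J *v X) Y /\<^sub>R t) \<longlongrightarrow> 2 * \<i> * a) (at 0)"
    "((\<lambda>t. T (Jt t *v Y - J *v Y) X /\<^sub>R t) \<longlongrightarrow> 2 * \<i> * b) (at 0)"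
    unfolding a_def b_def by (rule apply_path_difference_quotient_tendsto)+
  have "((\<lambda>t. 2 * \<i> * (T (Jt t *v X - J *v X) Y /\<^sub>R t) - 2 * \<i> * (T (Jt t *v Y - J *v Y) X /\<^sub>R t)
      - dform br \<omega> ((Jt t *v X - J *v X) /\<^sub>R t) (Jt t *v Y - J *v Y))
      \<longlongrightarrow> 2 * \<i> * (2 * \<i> * a) - 2 * \<i> * (2 * \<i> * b) - 0) (at 0)"
    using tendsto_diff[OF tendsto_diff[OF tendsto_mult_left[OF linear_terms(1)]
        tendsto_mult_left[OF linear_terms(2)]]
        quadratic_difference_quotient_tendsto_0[OF dform_bilinear[OF lie L10_linear[OF \<omega>]]]] .
  from tendsto_minus[OF this] eventually_proj02_dform_lift_quotient[OF \<omega>, of X Y, folded T_def]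
  have "((\<lambda>t. 4 * (proj02 (Jt t) (dform br (lift \<omega> t)) X Y /\<^sub>R t))
      \<longlongrightarrow> - (2 * \<i> * (2 * \<i> * a) - 2 * \<i> * (2 * \<i> * b) - 0)) (at 0)"
    by (rule Lim_transform_eventually)
  with tendsto_mult_left[OF proj02_dform_lift_quotient_tendsto[OF \<omega>], of 4]
  have "4 * proj02 J (dform br (\<theta> \<omega>)) X Y = - (2 * \<i> * (2 * \<i> * a) - 2 * \<i> * (2 * \<i> * b) - 0)"
    by (rule tendsto_unique[OF trivial_limit_at])
  also have "\<dots> = 4 * (a - b)"
    using i_squared by (simp add: algebra_simps)
  finally have "proj02 J (dform br (\<theta> \<omega>)) X Y = a - b"
    by (simp only: mult_cancel_left) simp
  then show ?thesis
    by (simp add: theta11_explicit_def a_def b_def T_def)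
qed

lemma theta_in_Kspace: "\<theta> \<in> Kspace br J"
proof -
  have "dbar_hom br J \<theta> \<omega> = (\<lambda>X Y. 0)" if \<omega>: "\<omega> \<in> L10 J" for \<omega>
  proof -
    have decomposition: "has_type_decomposition J (dform br \<omega>)" "has_type_decomposition J (dform br (\<theta> \<omega>))"
      using acs lie L10_linear[OF \<omega>] L01_linear[OF theta_in_L01[OF \<omega>]]
      by (simp_all add: dform_has_type_decomposition)
    show ?thesis
      unfolding dbar_hom_def dbar01_def dbar10_def comp02_eq_proj02[OF decomposition(2)]
        comp11_eq_proj11[OF decomposition(1)]
        theta11_eq_explicit[OF theta_is_hom proj11_in_L11[OF decomposition(1)]]
      by (simp add: proj02_dform_theta[OF \<omega>])
  qed
  then show ?thesis
    using theta_is_hom by (simp add: Kspace_def)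
qed

end

theorem proposition4p2:
  fixes br :: "real^'n \<Rightarrow> real^'n \<Rightarrow> real^'n"
    and n :: nat
    and J :: "real^'n^'n"
  assumes "lie_bracket br"
    and "CARD('n) = 2 * n"
    and "smooth_point (Cg br) J"
  shows "tangent_space br J \<subseteq> Kspace br J"
proof
  fix \<theta>
  assume "\<theta> \<in> tangent_space br J"
  then obtain Jt where Jt0: "Jt 0 = J" and in_Cg: "\<And>t. Jt t \<in> Cg br"
    and lifts: "\<forall>\<omega>\<in>L10 J. \<exists>\<beta>. (\<forall>\<^sub>F t in nhds 0. \<beta> t \<in> L01 J \<and> (\<lambda>x. \<omega> x + \<beta> t x) \<in> L10 (Jt t)) \<and>
      \<beta> 0 = (\<lambda>x. 0) \<and> (\<forall>x. ((\<lambda>t. \<beta> t x) has_vector_derivative \<theta> \<omega> x) (at 0))"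
    unfolding tangent_space_def by blast
  from bchoice[OF lifts] obtain lift where lift: "\<forall>\<omega>\<in>L10 J.
      (\<forall>\<^sub>F t in nhds 0. lift \<omega> t \<in> L01 J \<and> (\<lambda>x. \<omega> x + lift \<omega> t x) \<in> L10 (Jt t)) \<and>
      lift \<omega> 0 = (\<lambda>x. 0) \<and> (\<forall>x. ((\<lambda>t. lift \<omega> t x) has_vector_derivative \<theta> \<omega> x) (at 0))"
    by blast
  interpret integrable_lifted_path J Jt \<theta> lift br
  proof unfold_locales
    show "J \<in> acs" "integrable br J"
      using in_Cg[of 0] by (simp_all add: Jt0 Cg_def)
    show "\<forall>\<^sub>F t in at 0. is_lift J (Jt t) \<psi> (lift \<psi> t)" if "\<psi> \<in> L10 J" for \<psi>
      using lift that by (auto simp: is_lift_def eventually_at_filter elim: eventually_mono)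
    show "lift \<psi> 0 x = 0" "((\<lambda>t. lift \<psi> t x) has_vector_derivative \<theta> \<psi> x) (at 0)"
      if "\<psi> \<in> L10 J" for \<psi> x
      using lift that by simp_all
    show "lie_bracket br" "integrable br (Jt t)" for t
      using assms(1) in_Cg[of t] by (simp_all add: Cg_def)
  qed
  show "\<theta> \<in> Kspace br J"
    by (rule theta_in_Kspace)
qed

end
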